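(* Let $X$ be a CAT(0) space, $T_n:X\to X$ for $n\in\mathbb{N}$, and $(\gamma_n)$ a sequence of positive reals such that $(T_n)$ is jointly $(P_2)$ with respect to $(\gamma_n)$. Let $x\in X$, $x_0:=x$ and $x_{n+1}:=T_nx_n$ for all $n\in\mathbb{N}$. Then the sequence $\left(\frac{d(x_n,x_{n+1})}{\gamma_n}\right)_{n\in\mathbb{N}}$ is nonincreasing.
   Context: A geodesic space $(X,d)$ is CAT(0) if for all $z\in X$, all geodesics $\gamma:[a,b]\to X$ and all $t\in[0,1]$, $d^2(z,\gamma((1-t)a+tb))\le(1-t)d^2(z,\gamma(a))+td^2(z,\gamma(b))-t(1-t)d^2(\gamma(a),\gamma(b))$. The family $(T_n)$ is jointly $(P_2)$ with respect to $(\gamma_n)$ if for all $n,m\in\mathbb{N}$ and $x,y\in X$, $\frac1{\gamma_m}\big(d^2(T_nx,T_my)+d^2(y,T_my)-d^2(y,T_nx)\big)\le\frac1{\gamma_n}\big(d^2(x,T_my)-d^2(x,T_nx)-d^2(T_nx,T_my)\big)$. *)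

theory Defs
  imports "HOL-Analysis.Analysis"
begin

definition geodesic_path :: "real \<Rightarrow> real \<Rightarrow> (real \<Rightarrow> 'a::metric_space) \<Rightarrow> bool" where
  "geodesic_path a b g \<longleftrightarrow> a \<le> b \<and>
     (\<forall>s\<in>{a..b}. \<forall>t\<in>{a..b}. dist (g s) (g t) = \<bar>s - t\<bar>)"

definition geodesic_space :: "'a::metric_space itself \<Rightarrow> bool" where
  "geodesic_space _ \<longleftrightarrow> (\<forall>x y :: 'a. \<exists>g. geodesic_path 0 (dist x y) g \<and> g 0 = x \<and> g (dist x y) = y)"

definition CAT0 :: "'a::metric_space itself \<Rightarrow> bool" where
  "CAT0 X \<longleftrightarrow> geodesic_space X \<and>
     (\<forall>(z::'a) (g::real \<Rightarrow> 'a) a b t. geodesic_path a b g \<longrightarrow> t \<in> {0..1} \<longrightarrow>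
        (dist z (g ((1 - t) * a + t * b)))\<^sup>2 \<le>
          (1 - t) * (dist z (g a))\<^sup>2 + t * (dist z (g b))\<^sup>2 - t * (1 - t) * (dist (g a) (g b))\<^sup>2)"

definition jointly_P2 :: "(nat \<Rightarrow> 'a::metric_space \<Rightarrow> 'a) \<Rightarrow> (nat \<Rightarrow> real) \<Rightarrow> bool" where
  "jointly_P2 T \<gamma> \<longleftrightarrow> (\<forall>n m x y.
     (1 / \<gamma> m) * ((dist (T n x) (T m y))\<^sup>2 + (dist y (T m y))\<^sup>2 - (dist y (T n x))\<^sup>2)
       \<le> (1 / \<gamma> n) * ((dist x (T m y))\<^sup>2 - (dist x (T n x))\<^sup>2 - (dist (T n x) (T m y))\<^sup>2))"

end

theory Submission
  imports Defs
begin

text \<open>Apply the joint (P2) inequality with \<open>y = T\<^sub>n x\<close>: the left-hand side becomes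
  \<open>2 d(y, T\<^sub>m y)\<^sup>2 / \<gamma>\<^sub>m\<close>, while by the triangle inequality the right-hand side is at most
  \<open>2 d(x, y) d(y, T\<^sub>m y) / \<gamma>\<^sub>n\<close>. Dividing by \<open>2 d(y, T\<^sub>m y)\<close> compares the two step ratios.\<close>

lemma ratio_le_of_sq_le_defect:
  fixes a b c gn gm :: real
  assumes "gn > 0" "gm > 0" "a \<ge> 0" "b \<ge> 0" "c \<le> a + b" "0 \<le> c"
    and "2 * b\<^sup>2 / gm \<le> (c\<^sup>2 - a\<^sup>2 - b\<^sup>2) / gn"
  shows "b / gm \<le> a / gn"
proof (cases "b = 0")
  case True
  then show ?thesis using assms by simp
next
  case False
  with assms have "b > 0" by simp
  have "c\<^sup>2 \<le> (a + b)\<^sup>2" using assms by (simp add: power_mono)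
  then have "(c\<^sup>2 - a\<^sup>2 - b\<^sup>2) / gn \<le> 2 * a * b / gn"
    using \<open>gn > 0\<close> by (intro divide_right_mono) (auto simp: power2_eq_square algebra_simps)
  with assms(7) have "2 * (b * (b / gm)) \<le> 2 * (b * (a / gn))"
    by (simp add: power2_eq_square algebra_simps)
  then have "b * (b / gm) \<le> b * (a / gn)" by linarith
  with \<open>b > 0\<close> show ?thesis using mult_le_cancel_left_pos by blast
qed

lemma jointly_P2_step_ratio_le:
  fixes T :: "nat \<Rightarrow> 'a::metric_space \<Rightarrow> 'a"
  assumes "jointly_P2 T \<gamma>" "\<gamma> n > 0" "\<gamma> m > 0"
  shows "dist (T n x) (T m (T n x)) / \<gamma> m \<le> dist x (T n x) / \<gamma> n"
proof (rule ratio_le_of_sq_le_defect[OF assms(2,3) _ _ dist_triangle])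
  let ?y = "T n x"
  have "(1 / \<gamma> m) * ((dist ?y (T m ?y))\<^sup>2 + (dist ?y (T m ?y))\<^sup>2 - (dist ?y ?y)\<^sup>2)
      \<le> (1 / \<gamma> n) * ((dist x (T m ?y))\<^sup>2 - (dist x ?y)\<^sup>2 - (dist ?y (T m ?y))\<^sup>2)"
    using assms(1) unfolding jointly_P2_def by blast
  then show "2 * (dist ?y (T m ?y))\<^sup>2 / \<gamma> m
      \<le> ((dist x (T m ?y))\<^sup>2 - (dist x ?y)\<^sup>2 - (dist ?y (T m ?y))\<^sup>2) / \<gamma> n"
    by simp
qed auto

theorem proposition3p12:
  fixes T :: "nat \<Rightarrow> 'a::metric_space \<Rightarrow> 'a" and \<gamma> :: "nat \<Rightarrow> real"
    and x :: 'a and xs :: "nat \<Rightarrow> 'a"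
  assumes "CAT0 TYPE('a)"
    and "\<And>n. \<gamma> n > 0"
    and "jointly_P2 T \<gamma>"
    and "xs 0 = x"
    and "\<And>n. xs (Suc n) = T n (xs n)"
  shows "antimono (\<lambda>n. dist (xs n) (xs (Suc n)) / \<gamma> n)"
  unfolding antimono_iff_le_Suc
  using jointly_P2_step_ratio_le[OF assms(3,2,2)] by (simp add: assms(5))

end
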